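(* In the setting described in the context, fix $t_0\in(0,T_0)$ and let $w_i$ be as defined there. If $i\sim j$, then $\lim_{t\to T_0}|w_i(t)-w_j(t)|=0$.
   Context: Setting: $N,d\ge 1$, $\alpha\in(0,1)$, $\psi(s)=s^{-\alpha}$ ($s>0$), $\psi(0)=0$; $\psi_n(s)=\psi(s)$ for $s\ge(n-1)^{-1/\alpha}$, $\psi_n(s)=n$ for $s\le n^{-1/\alpha}$, smooth and monotone in between. Fix $T>0$ and initial data $x(0),v(0)\in\mathbb{R}^{Nd}$; let $x^n$ be the $C^2$ solution on $[0,T]$ of $\dot x^n_i=v^n_i$, $\dot v^n_i=\frac1N\sum_k(v^n_k-v^n_i)\psi_n(|x^n_i-x^n_k|)$ with these data. Pass to a subsequence (not relabeled) with $x^n\to x$ uniformly on $[0,T]$. Let $B_i(0)=\{k: x_k(0)\ne x_i(0)\text{ or }v_k(0)\ne v_i(0)\}$ and $T_0:=\inf\{t>0:\min_{i,\ j\in B_i(0)}\lim_{n}|x^n_i(t)-x^n_j(t)|=0\}$; assume $T_0\le T$. Assume moreover (after a further subsequence) that $x^n\to x$ in $C^1([0,t])$ for every $t<T_0$, and set $v=\dot x$ on $[0,T_0)$. Define $i\,\dot\sim\, j$ iff $j\notin B_i(0)$ or $\int_t^{T_0}\psi(|x_i(s)-x_j(s)|)ds=\infty$ for all $t<T_0$; let $\sim$ be the equivalence relation generated by $\dot\sim$ (its transitive closure), with classes $[i]$. For fixed $t_0\in(0,T_0)$, $w_i=w_i^{t_0}$ ($i=1,\dots,N$) is the solution on $[t_0,T_0)$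 of $\dot w_i=\frac1N\sum_{k\in[i]}(w_k-w_i)\psi(|x_i-x_k|)$ with $w_i(t_0)=v_i(t_0)$. *)

theory Defs
  imports "HOL-Analysis.Analysis"
begin

definition psi :: "real \<Rightarrow> real \<Rightarrow> real" where
  "psi \<alpha> s = (if s > 0 then s powr (- \<alpha>) else 0)"

definition smooth_on :: "real set \<Rightarrow> (real \<Rightarrow> real) \<Rightarrow> bool" where
  "smooth_on S f \<longleftrightarrow> (\<forall>m. \<forall>s\<in>S. ((deriv ^^ m) f) differentiable (at s))"

definition psi_reg :: "real \<Rightarrow> (nat \<Rightarrow> real \<Rightarrow> real) \<Rightarrow> bool" where
  "psi_reg \<alpha> \<psi>n \<longleftrightarrow> (\<forall>n\<ge>2.
      (\<forall>s. s \<ge> real (n - 1) powr (- 1 / \<alpha>) \<longrightarrow> \<psi>n n s = psi \<alpha> s)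
    \<and> (\<forall>s. 0 \<le> s \<and> s \<le> real n powr (- 1 / \<alpha>) \<longrightarrow> \<psi>n n s = real n)
    \<and> smooth_on {0<..} (\<psi>n n)
    \<and> antimono_on {real n powr (- 1 / \<alpha>) .. real (n - 1) powr (- 1 / \<alpha>)} (\<psi>n n))"

definition Bset :: "nat \<Rightarrow> (nat \<Rightarrow> real^'d::finite) \<Rightarrow> (nat \<Rightarrow> real^'d) \<Rightarrow> nat \<Rightarrow> nat set"
  where "Bset N x0 v0 i = {k. k < N \<and> (x0 k \<noteq> x0 i \<or> v0 k \<noteq> v0 i)}"

definition dsim :: "nat \<Rightarrow> (nat \<Rightarrow> real^'d::finite) \<Rightarrow> (nat \<Rightarrow> real^'d) \<Rightarrow> real
    \<Rightarrow> (real \<Rightarrow> nat \<Rightarrow> real^'d) \<Rightarrow> real \<Rightarrow> nat \<Rightarrow> nat \<Rightarrow> bool" where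
  "dsim N x0 v0 \<alpha> x T0 i j \<longleftrightarrow> i < N \<and> j < N \<and>
     (j \<notin> Bset N x0 v0 i \<or>
      (\<forall>t<T0. (\<integral>\<^sup>+ s\<in>{t..T0}. ennreal (psi \<alpha> (norm (x s i - x s j))) \<partial>lborel) = \<infinity>))"

definition csim :: "nat \<Rightarrow> (nat \<Rightarrow> real^'d::finite) \<Rightarrow> (nat \<Rightarrow> real^'d) \<Rightarrow> real
    \<Rightarrow> (real \<Rightarrow> nat \<Rightarrow> real^'d) \<Rightarrow> real \<Rightarrow> nat \<Rightarrow> nat \<Rightarrow> bool" where
  "csim N x0 v0 \<alpha> x T0 = equivclp (dsim N x0 v0 \<alpha> x T0)"

definition cls :: "nat \<Rightarrow> (nat \<Rightarrow> real^'d::finite) \<Rightarrow> (nat \<Rightarrow> real^'d) \<Rightarrow> real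
    \<Rightarrow> (real \<Rightarrow> nat \<Rightarrow> real^'d) \<Rightarrow> real \<Rightarrow> nat \<Rightarrow> nat set" where
  "cls N x0 v0 \<alpha> x T0 i = {k. k < N \<and> csim N x0 v0 \<alpha> x T0 i k}"

end

theory Submission
  imports Defs
begin

text \<open>On the class of \<open>i\<close>, each component of \<open>w\<close> solves a linear consensus system
  \<open>y\<^sub>k' = \<Sum>\<^sub>l a\<^sub>k\<^sub>l (y\<^sub>l - y\<^sub>k)\<close> with symmetric nonnegative weights. For such a system the sum of the
  \<open>m\<close> largest values is nonincreasing for every \<open>m\<close>; hence all these sums converge as \<open>t \<rightarrow> T0\<close>,
  and every value, being trapped near the finitely many differences of their limits, converges
  too. If \<open>a\<^sub>i\<^sub>j\<close> is not integrable up to \<open>T0\<close>, agents \<open>i\<close> and \<open>j\<close> have the same limit: otherwise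
  the values above a level between the two limits would lose mass at a rate \<open>\<ge> gap \<cdot> a\<^sub>i\<^sub>j\<close>
  while staying bounded below. If instead \<open>j \<notin> B\<^sub>i(0)\<close>, the two agents have the same data, so by
  uniqueness they coincide in every regularised system and in the limit, and \<open>w\<^sub>i - w\<^sub>j\<close> solves
  a damped linear equation with zero initial value. Since \<open>w\<^sub>i - w\<^sub>j \<rightarrow> 0\<close> is an equivalence
  relation, it extends from the generating relation to its equivalence closure.\<close>

section \<open>Monotonicity and one-sided limits of real functions\<close>

lemma DERIV_nonpos_imp_antimono_within:
  fixes f f' :: "real \<Rightarrow> real"
  assumes deriv: "\<And>u. u \<in> S \<Longrightarrow> (f has_real_derivative f' u) (at u within S)"
    and nonpos: "\<And>u. u \<in> S \<Longrightarrow> f' u \<le> 0"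
    and "s \<le> t" and sub: "{s..t} \<subseteq> S"
  shows "f t \<le> f s"
proof (cases "s = t")
  case False
  then have "s < t" using \<open>s \<le> t\<close> by simp
  have "(f has_derivative (\<lambda>h. f' u * h)) (at u within {s..t})" if "s \<le> u" "u \<le> t" for u
    using DERIV_subset[OF deriv sub] that sub by (auto simp: has_field_derivative_def)
  from mvt_simple[OF \<open>s < t\<close> this]
  obtain u where "u \<in> {s<..<t}" "f t - f s = f' u * (t - s)" by auto
  moreover have "u \<in> S" using sub \<open>u \<in> {s<..<t}\<close> by auto
  then have "f' u * (t - s) \<le> 0" using nonpos \<open>s < t\<close> by (simp add: mult_nonpos_nonneg)
  ultimately show ?thesis by simp
qed simp

lemma antimono_bdd_below_tendsto_at_left:
  fixes f :: "real \<Rightarrow> real"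
  assumes antimono: "\<And>s t. a \<le> s \<Longrightarrow> s \<le> t \<Longrightarrow> t < b \<Longrightarrow> f t \<le> f s"
    and bound: "\<And>t. a \<le> t \<Longrightarrow> t < b \<Longrightarrow> c \<le> f t" and "a < b"
  shows "(f \<longlongrightarrow> Inf (f ` {a..<b})) (at_left b)"
proof (rule order_tendstoI)
  have bdd: "bdd_below (f ` {a..<b})" using bound by (auto intro!: bdd_belowI)
  fix y assume "y < Inf (f ` {a..<b})"
  then have "y < f t" if "a \<le> t" "t < b" for t
    using cInf_lower[OF _ bdd, of "f t"] that by force
  then show "eventually (\<lambda>t. y < f t) (at_left b)"
    unfolding eventually_at_left[OF \<open>a < b\<close>] by (intro exI[of _ a]) (auto simp: \<open>a < b\<close>)
next
  fix y assume "Inf (f ` {a..<b}) < y"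
  then obtain s where s: "s \<in> {a..<b}" "f s < y"
    using cInf_lessD[of "f ` {a..<b}" y] \<open>a < b\<close> by auto
  then show "eventually (\<lambda>t. f t < y) (at_left b)"
    unfolding eventually_at_left[OF \<open>a < b\<close>]
    by (intro exI[of _ s]) (auto intro: le_less_trans[OF antimono])
qed

lemma eventually_at_left_obtain:
  fixes a b :: real
  assumes "eventually P (at_left b)" "a < b"
  obtains c where "a \<le> c" "c < b" "\<And>t. c \<le> t \<Longrightarrow> t < b \<Longrightarrow> P t"
proof -
  obtain d where d: "d < b" "\<And>t. d < t \<Longrightarrow> t < b \<Longrightarrow> P t"
    using assms unfolding eventually_at_left[OF \<open>a < b\<close>] by blast
  show ?thesis
    by (rule that[of "(max a d + b) / 2"]) (use d \<open>a < b\<close> in auto)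
qed

lemma finite_set_separated:
  fixes L :: "real set"
  assumes "finite L"
  obtains \<delta> where "\<delta> > 0" "\<And>p q. p \<in> L \<Longrightarrow> q \<in> L \<Longrightarrow> p \<noteq> q \<Longrightarrow> \<delta> \<le> \<bar>p - q\<bar>"
proof -
  define D where "D = (\<lambda>(p, q). \<bar>p - q\<bar>) ` ((L \<times> L) - {(p, q). p = q})"
  have "finite D" unfolding D_def using assms by simp
  show ?thesis
  proof (rule that[of "Min (insert 1 D)"])
    show "0 < Min (insert 1 D)" using \<open>finite D\<close> by (auto simp: D_def)
    show "Min (insert 1 D) \<le> \<bar>p - q\<bar>" if "p \<in> L" "q \<in> L" "p \<noteq> q" for p q
      using \<open>finite D\<close> that by (intro Min_le) (auto simp: D_def)
  qed
qed

lemma continuous_on_Max_image: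
  fixes f :: "'i \<Rightarrow> 'a::topological_space \<Rightarrow> real"
  assumes "finite F" "F \<noteq> {}" "\<And>A. A \<in> F \<Longrightarrow> continuous_on S (f A)"
  shows "continuous_on S (\<lambda>u. Max ((\<lambda>A. f A u) ` F))"
  using assms by (induction F rule: finite_ne_induct) (auto intro!: continuous_on_max)

lemma right_slope_bound_imp_le:
  fixes g :: "real \<Rightarrow> real"
  assumes cont: "continuous_on {s..t} g" and "s \<le> t"
    and slope: "\<And>\<sigma>. s \<le> \<sigma> \<Longrightarrow> \<sigma> < t \<Longrightarrow>
      eventually (\<lambda>u. \<sigma> < u \<longrightarrow> g u \<le> g \<sigma> + e * (u - \<sigma>)) (at \<sigma> within {s..t})"
  shows "g t \<le> g s + e * (t - s)"
proof -
  define S where "S = {u \<in> {s..t}. g u \<le> g s + e * (u - s)}"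
  have "closed S"
    unfolding S_def by (intro continuous_on_closed_Collect_le cont continuous_intros)
  moreover have "s \<in> S" unfolding S_def using \<open>s \<le> t\<close> by auto
  moreover have bdd: "bdd_above S" unfolding S_def by (auto intro!: bdd_aboveI[of _ t])
  ultimately have "Sup S \<in> S" by (intro closed_contains_Sup) auto
  then have \<sigma>: "s \<le> Sup S" "Sup S \<le> t" "g (Sup S) \<le> g s + e * (Sup S - s)"
    unfolding S_def by auto
  have "Sup S = t"
  proof (rule ccontr)
    assume "Sup S \<noteq> t"
    then have "Sup S < t" using \<sigma> by simp
    from slope[OF \<sigma>(1) this] obtain d where "d > 0" and d: "\<And>u. u \<in> {s..t} \<Longrightarrow> u \<noteq> Sup S \<Longrightarrow>
        dist u (Sup S) < d \<Longrightarrow> Sup S < u \<longrightarrow> g u \<le> g (Sup S) + e * (u - Sup S)"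
      unfolding eventually_at by blast
    define u where "u = min (Sup S + d / 2) t"
    have u: "Sup S < u" "u \<le> t" "dist u (Sup S) < d"
      using \<open>Sup S < t\<close> \<open>d > 0\<close> unfolding u_def dist_real_def by auto
    then have "g u \<le> g s + e * (u - s)"
      using d[of u] \<sigma> by (auto simp: algebra_simps)
    then have "u \<in> S" unfolding S_def using u \<sigma> by auto
    then show False using cSup_upper[OF _ bdd] u by fastforce
  qed
  then show ?thesis using \<sigma> by simp
qed

lemma Max_right_slope_le:
  fixes f f' :: "'i \<Rightarrow> real \<Rightarrow> real"
  assumes F: "finite F" "F \<noteq> {}"
    and deriv: "\<And>A. A \<in> F \<Longrightarrow> (f A has_real_derivative f' A \<sigma>) (at \<sigma> within S)"
    and nonpos: "\<And>A. A \<in> F \<Longrightarrow> f A \<sigma> = Max ((\<lambda>B. f B \<sigma>) ` F) \<Longrightarrow> f' A \<sigma> \<le> 0"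
    and "e > 0"
  shows "eventually (\<lambda>u. \<sigma> < u \<longrightarrow>
    Max ((\<lambda>B. f B u) ` F) \<le> Max ((\<lambda>B. f B \<sigma>) ` F) + e * (u - \<sigma>)) (at \<sigma> within S)"
proof -
  let ?M = "Max ((\<lambda>B. f B \<sigma>) ` F)"
  have each: "eventually (\<lambda>u. \<sigma> < u \<longrightarrow> f A u \<le> ?M + e * (u - \<sigma>)) (at \<sigma> within S)"
    if A: "A \<in> F" for A
  proof (cases "f A \<sigma> < ?M")
    case True
    have "(f A \<longlongrightarrow> f A \<sigma>) (at \<sigma> within S)"
      using DERIV_continuous[OF deriv[OF A]] by (simp add: continuous_within)
    from order_tendstoD(2)[OF this True] show ?thesis
      by eventually_elim (use \<open>e > 0\<close> in \<open>auto intro: add_increasing2\<close>)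
  next
    case False
    then have max: "f A \<sigma> = ?M" using Max_ge[of "(\<lambda>B. f B \<sigma>) ` F"] F A by fastforce
    have "((\<lambda>u. (f A u - f A \<sigma>) / (u - \<sigma>)) \<longlongrightarrow> f' A \<sigma>) (at \<sigma> within S)"
      using deriv[OF A] by (simp add: has_field_derivative_iff)
    from order_tendstoD(2)[OF this] have
      "eventually (\<lambda>u. (f A u - f A \<sigma>) / (u - \<sigma>) < e) (at \<sigma> within S)"
      using nonpos[OF A max] \<open>e > 0\<close> by simp
    then show ?thesis
      by eventually_elim (use max in \<open>auto simp: divide_less_eq\<close>)
  qed
  have "eventually (\<lambda>u. \<forall>A\<in>F. \<sigma> < u \<longrightarrow> f A u \<le> ?M + e * (u - \<sigma>)) (at \<sigma> within S)"
    using each by (intro eventually_ball_finite[OF F(1)] ballI)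
  then show ?thesis
    by eventually_elim (use F in auto)
qed

lemma Max_antimono_if_deriv_nonpos_at_max:
  fixes f f' :: "'i \<Rightarrow> real \<Rightarrow> real"
  assumes F: "finite F" "F \<noteq> {}"
    and deriv: "\<And>A u. A \<in> F \<Longrightarrow> u \<in> S \<Longrightarrow> (f A has_real_derivative f' A u) (at u within S)"
    and nonpos: "\<And>A u. A \<in> F \<Longrightarrow> u \<in> S \<Longrightarrow> f A u = Max ((\<lambda>B. f B u) ` F) \<Longrightarrow> f' A u \<le> 0"
    and "s \<le> t" and sub: "{s..t} \<subseteq> S"
  shows "Max ((\<lambda>B. f B t) ` F) \<le> Max ((\<lambda>B. f B s) ` F)"
proof -
  define M where "M u = Max ((\<lambda>B. f B u) ` F)" for u
  have deriv': "(f A has_real_derivative f' A u) (at u within {s..t})" if "A \<in> F" "u \<in> {s..t}" for A u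
    using DERIV_subset[OF deriv sub] that sub by auto
  have cont: "continuous_on {s..t} M"
    unfolding M_def using deriv' by (intro continuous_on_Max_image F DERIV_continuous_on) auto
  have slope: "M t \<le> M s + e * (t - s)" if "e > 0" for e
    using cont \<open>s \<le> t\<close>
  proof (rule right_slope_bound_imp_le)
    fix \<sigma> assume "s \<le> \<sigma>" "\<sigma> < t"
    then show "eventually (\<lambda>u. \<sigma> < u \<longrightarrow> M u \<le> M \<sigma> + e * (u - \<sigma>)) (at \<sigma> within {s..t})"
      unfolding M_def using sub
      by (intro Max_right_slope_le[where f' = f'] F deriv' nonpos \<open>e > 0\<close>) auto
  qed
  show ?thesis
  proof (cases "s = t")
    case False
    then have "s < t" using \<open>s \<le> t\<close> by simp
    have "M t \<le> M s + \<epsilon>" if "\<epsilon> > 0" for \<epsilon>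
      using slope[of "\<epsilon> / (t - s)"] that \<open>s < t\<close> by simp
    then show ?thesis unfolding M_def by (rule field_le_epsilon)
  qed simp
qed

lemma incseq_exhausting_Ico:
  fixes a b :: real
  assumes "a < b"
  obtains \<tau> :: "nat \<Rightarrow> real"
  where "mono \<tau>" "\<And>n. a \<le> \<tau> n" "\<And>n. \<tau> n < b" "\<And>s. s < b \<Longrightarrow> \<exists>n. s \<le> \<tau> n"
proof -
  define \<tau> where "\<tau> n = b - (b - a) / real (Suc n)" for n
  have "(b - a) / real (Suc n) \<le> b - a" for n
    using \<open>a < b\<close> by (simp add: divide_le_eq)
  then have "a \<le> \<tau> n" "\<tau> n < b" for n
    using \<open>a < b\<close> unfolding \<tau>_def by (auto simp: algebra_simps)
  moreover have "mono \<tau>"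
    unfolding \<tau>_def mono_def using \<open>a < b\<close> by (auto intro!: divide_left_mono)
  moreover have "\<exists>n. s \<le> \<tau> n" if "s < b" for s
  proof -
    obtain n where "(b - a) / (b - s) < real (Suc n)"
      using reals_Archimedean2 by (metis less_trans of_nat_Suc lessI add.commute less_add_one)
    then have "(b - a) / real (Suc n) < b - s"
      using that by (simp add: divide_less_eq mult.commute)
    then show ?thesis unfolding \<tau>_def by (intro exI[of _ n]) simp
  qed
  ultimately show ?thesis using that by blast
qed

lemma set_nn_integral_le_if_integrals_bounded:
  fixes f :: "real \<Rightarrow> real"
  assumes "a < b" and cont: "continuous_on {a..<b} f" and nonneg: "\<And>s. 0 \<le> f s"
    and bound: "\<And>t. a \<le> t \<Longrightarrow> t < b \<Longrightarrow> integral {a..t} f \<le> K"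
  shows "(\<integral>\<^sup>+ s\<in>{a..b}. ennreal (f s) \<partial>lborel) \<le> ennreal K"
proof -
  obtain \<tau> :: "nat \<Rightarrow> real" where \<tau>_mono: "mono \<tau>" and \<tau>: "\<And>n. a \<le> \<tau> n" "\<And>n. \<tau> n < b"
    and \<tau>_exhaust: "\<And>s. s < b \<Longrightarrow> \<exists>n. s \<le> \<tau> n"
    using incseq_exhausting_Ico[OF \<open>a < b\<close>] by blast
  define g where "g n s = ennreal (f s) * indicator {a..\<tau> n} s" for n s
  have cont_n: "continuous_on {a..\<tau> n} f" for n
    by (rule continuous_on_subset[OF cont]) (use \<tau>(2)[of n] in auto)
  have int_g: "integral\<^sup>N lborel (g n) = ennreal (integral {a..\<tau> n} f)" for n
    unfolding g_def
    by (rule nn_integral_has_integral_lebesgue') (use nonneg integrable_continuous_interval[OF cont_n] in auto)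
  have "incseq g"
    using \<tau>_mono unfolding incseq_def le_fun_def g_def mono_def
    by (auto simp: indicator_def intro: order.trans)
  moreover have "g n \<in> borel_measurable lborel" for n
  proof -
    have "(\<lambda>s. indicator {a..\<tau> n} s *\<^sub>R f s) \<in> borel_measurable borel"
      by (rule borel_measurable_continuous_on_indicator) (use cont_n in auto)
    moreover have "g n = (\<lambda>s. ennreal (indicator {a..\<tau> n} s *\<^sub>R f s))"
      unfolding g_def by (auto simp: indicator_def fun_eq_iff)
    ultimately show ?thesis by simp
  qed
  ultimately have "(\<integral>\<^sup>+ s. (SUP n. g n s) \<partial>lborel) = (SUP n. integral\<^sup>N lborel (g n))"
    by (rule nn_integral_monotone_convergence_SUP)
  moreover have "(SUP n. g n s) = ennreal (f s) * indicator {a..<b} s" for s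
  proof (cases "s \<in> {a..<b}")
    case True
    then obtain n where "s \<le> \<tau> n" using \<tau>_exhaust by auto
    then have "g n s = ennreal (f s)" unfolding g_def using True by simp
    moreover have "g m s \<le> ennreal (f s)" for m unfolding g_def by (simp add: indicator_def)
    ultimately show ?thesis
      using True by (intro antisym SUP_least) (auto intro: SUP_upper2[of n])
  next
    case False
    then have "g n s = 0" for n unfolding g_def using \<tau>(2)[of n] by (auto simp: indicator_def)
    then show ?thesis using False by simp
  qed
  moreover have "(SUP n. integral\<^sup>N lborel (g n)) \<le> ennreal K"
    by (rule SUP_least) (use int_g bound \<tau> in \<open>auto intro: ennreal_leI\<close>)
  moreover have "(\<integral>\<^sup>+ s\<in>{a..b}. ennreal (f s) \<partial>lborel)
      = (\<integral>\<^sup>+ s. ennreal (f s) * indicator {a..<b} s \<partial>lborel)"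
    by (rule nn_integral_cong_AE)
      (use AE_lborel_singleton[of b] in \<open>auto elim!: eventually_mono simp: indicator_def\<close>)
  ultimately show ?thesis by simp
qed

lemma has_real_derivative_inner_self:
  fixes f :: "real \<Rightarrow> 'a::real_inner"
  assumes "(f has_vector_derivative f') (at t within S)"
  shows "((\<lambda>s. f s \<bullet> f s) has_real_derivative 2 * (f t \<bullet> f')) (at t within S)"
proof -
  have "(f has_derivative (\<lambda>h. h *\<^sub>R f')) (at t within S)"
    using assms by (simp add: has_vector_derivative_def)
  from has_derivative_inner[OF this this] show ?thesis
    unfolding has_field_derivative_def
    by (rule has_derivative_eq_rhs) (auto simp: fun_eq_iff inner_commute algebra_simps)
qed

lemma Gronwall_zero:
  fixes E E' :: "real \<Rightarrow> real"
  assumes deriv: "\<And>u. u \<in> {a..b} \<Longrightarrow> (E has_real_derivative E' u) (at u within {a..b})"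
    and growth: "\<And>u. u \<in> {a..b} \<Longrightarrow> E' u \<le> K * E u"
    and nonneg: "\<And>u. u \<in> {a..b} \<Longrightarrow> 0 \<le> E u"
    and "E a = 0" and t: "t \<in> {a..b}"
  shows "E t = 0"
proof -
  define G where "G u = E u * exp (- K * u)" for u
  have "G t \<le> G a"
  proof (rule DERIV_nonpos_imp_antimono_within[where f = G and S = "{a..b}"
      and f' = "\<lambda>u. (E' u - K * E u) * exp (- K * u)"])
    fix u assume u: "u \<in> {a..b}"
    have "((\<lambda>u. exp (- K * u)) has_real_derivative exp (- K * u) * (- K)) (at u within {a..b})"
      by (auto intro!: derivative_eq_intros)
    from DERIV_mult[OF deriv[OF u] this]
    show "(G has_real_derivative (E' u - K * E u) * exp (- K * u)) (at u within {a..b})"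
      unfolding G_def[abs_def] by (simp add: algebra_simps)
  next
    fix u assume u: "u \<in> {a..b}"
    show "(E' u - K * E u) * exp (- K * u) \<le> 0"
      using growth[OF u] by (simp add: mult_nonpos_nonneg)
  qed (use t in auto)
  then have "E t \<le> 0" using \<open>E a = 0\<close> unfolding G_def by (simp add: mult_le_0_iff)
  then show ?thesis using nonneg[OF t] by simp
qed

section \<open>Linear consensus systems\<close>

locale consensus_system =
  fixes y :: "'i \<Rightarrow> real \<Rightarrow> real" and a :: "'i \<Rightarrow> 'i \<Rightarrow> real \<Rightarrow> real"
    and C :: "'i set" and t0 T0 :: real
  assumes finite_C: "finite C" and t0_less: "t0 < T0"
    and a_nonneg: "\<And>k l t. 0 \<le> a k l t"
    and a_sym: "\<And>k l t. a k l t = a l k t"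
    and y_deriv: "\<And>k t. k \<in> C \<Longrightarrow> t \<in> {t0..<T0} \<Longrightarrow>
       (y k has_real_derivative (\<Sum>l\<in>C. a k l t * (y l t - y k t))) (at t within {t0..<T0})"
begin

definition partial_sum :: "'i set \<Rightarrow> real \<Rightarrow> real" where
  "partial_sum A t = (\<Sum>k\<in>A. y k t)"

definition subsets_card :: "nat \<Rightarrow> 'i set set" where
  "subsets_card m = {A. A \<subseteq> C \<and> card A = m}"

definition top_sum :: "nat \<Rightarrow> real \<Rightarrow> real" where
  "top_sum m t = Max ((\<lambda>A. partial_sum A t) ` subsets_card m)"

lemma internal_flux_cancels:
  assumes "finite A"
  shows "(\<Sum>k\<in>A. \<Sum>l\<in>A. a k l t * (y l t - y k t)) = 0"
proof -
  have "(\<Sum>k\<in>A. \<Sum>l\<in>A. a k l t * y l t) = (\<Sum>l\<in>A. \<Sum>k\<in>A. a k l t * y l t)"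
    by (rule sum.swap)
  also have "\<dots> = (\<Sum>k\<in>A. \<Sum>l\<in>A. a k l t * y k t)"
    by (simp add: a_sym)
  finally show ?thesis by (simp add: right_diff_distrib sum_subtractf)
qed

lemma partial_sum_deriv:
  assumes A: "A \<subseteq> C" and t: "t \<in> {t0..<T0}"
  shows "(partial_sum A has_real_derivative (\<Sum>k\<in>A. \<Sum>l\<in>C-A. a k l t * (y l t - y k t)))
           (at t within {t0..<T0})"
proof -
  have "finite A" using A finite_C finite_subset by blast
  have "(partial_sum A has_real_derivative (\<Sum>k\<in>A. \<Sum>l\<in>C. a k l t * (y l t - y k t)))
      (at t within {t0..<T0})"
    unfolding partial_sum_def[abs_def] by (rule DERIV_sum) (use A t y_deriv in auto)
  moreover have "(\<Sum>k\<in>A. \<Sum>l\<in>C. a k l t * (y l t - y k t))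
      = (\<Sum>k\<in>A. \<Sum>l\<in>C-A. a k l t * (y l t - y k t)) + (\<Sum>k\<in>A. \<Sum>l\<in>A. a k l t * (y l t - y k t))"
    by (simp only: sum.subset_diff[OF A finite_C] sum.distrib)
  ultimately show ?thesis using internal_flux_cancels[OF \<open>finite A\<close>] by simp
qed

lemma finite_subsets_card: "finite (subsets_card m)"
  unfolding subsets_card_def using finite_C by (auto intro: finite_subset[of _ "Pow C"])

lemma subsets_card_nonempty: "m \<le> card C \<Longrightarrow> subsets_card m \<noteq> {}"
  unfolding subsets_card_def using obtain_subset_with_card_n by blast

lemma partial_sum_le_top_sum: "A \<in> subsets_card m \<Longrightarrow> partial_sum A t \<le> top_sum m t"
  unfolding top_sum_def using finite_subsets_card by simp

lemma top_set_dominates: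
  assumes "A \<subseteq> C" "k \<in> A" "l \<in> C - A" "partial_sum A t = top_sum (card A) t"
  shows "y l t \<le> y k t"
proof -
  have "finite A" using assms finite_C finite_subset by blast
  then have "card A > 0" using assms(2) card_gt_0_iff by blast
  define B where "B = insert l (A - {k})"
  have "B \<in> subsets_card (card A)"
    unfolding subsets_card_def B_def using assms \<open>finite A\<close> \<open>card A > 0\<close>
    by (auto simp: card_insert_if card_Diff_singleton)
  then have "partial_sum B t \<le> partial_sum A t" using partial_sum_le_top_sum assms(4) by simp
  moreover have "partial_sum B t = partial_sum A t - y k t + y l t"
    unfolding partial_sum_def B_def using assms \<open>finite A\<close> by (simp add: sum.remove[of A k])
  ultimately show ?thesis by simp
qed

text \<open>A maximising set loses mass only to smaller values, so every top sum is nonincreasing.\<close>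

lemma top_sum_antimono:
  assumes "m \<le> card C" "t0 \<le> s" "s \<le> t" "t < T0"
  shows "top_sum m t \<le> top_sum m s"
  unfolding top_sum_def
proof (rule Max_antimono_if_deriv_nonpos_at_max[where S = "{t0..<T0}"])
  fix A u assume A: "A \<in> subsets_card m" and u: "u \<in> {t0..<T0}"
  then show "(partial_sum A has_real_derivative (\<Sum>k\<in>A. \<Sum>l\<in>C-A. a k l u * (y l u - y k u)))
      (at u within {t0..<T0})"
    unfolding subsets_card_def by (intro partial_sum_deriv) auto
  assume "partial_sum A u = Max ((\<lambda>B. partial_sum B u) ` subsets_card m)"
  then have "y l u \<le> y k u" if "k \<in> A" "l \<in> C - A" for k l
    using top_set_dominates[OF _ that] A unfolding top_sum_def subsets_card_def by auto
  then show "(\<Sum>k\<in>A. \<Sum>l\<in>C-A. a k l u * (y l u - y k u)) \<le> 0"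
    by (intro sum_nonpos mult_nonneg_nonpos a_nonneg) auto
qed (use assms finite_subsets_card subsets_card_nonempty in auto)

lemma consensus_system_uminus: "consensus_system (\<lambda>k t. - y k t) a C t0 T0"
proof
  fix k t assume "k \<in> C" "t \<in> {t0..<T0}"
  from DERIV_minus[OF y_deriv[OF this]]
  show "((\<lambda>t. - y k t) has_real_derivative (\<Sum>l\<in>C. a k l t * (- y l t - - y k t)))
      (at t within {t0..<T0})"
    by (simp add: sum_negf[symmetric] algebra_simps)
qed (use finite_C t0_less a_nonneg a_sym in auto)

text \<open>The largest value of the negated system is nonincreasing, so the values are bounded below.\<close>

lemma values_bounded_below:
  obtains \<mu> where "\<And>k t. k \<in> C \<Longrightarrow> t \<in> {t0..<T0} \<Longrightarrow> \<mu> \<le> y k t"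
proof (cases "C = {}")
  case False
  interpret neg: consensus_system "\<lambda>k t. - y k t" a C t0 T0 by (rule consensus_system_uminus)
  have "1 \<le> card C" using False finite_C by (simp add: Suc_le_eq card_gt_0_iff)
  show ?thesis
  proof (rule that[of "- neg.top_sum 1 t0"])
    fix k t assume k: "k \<in> C" and t: "t \<in> {t0..<T0}"
    have "{k} \<in> neg.subsets_card 1" unfolding neg.subsets_card_def using k by auto
    then have "neg.partial_sum {k} t \<le> neg.top_sum 1 t" by (rule neg.partial_sum_le_top_sum)
    also have "\<dots> \<le> neg.top_sum 1 t0" using neg.top_sum_antimono \<open>1 \<le> card C\<close> t by auto
    finally show "- neg.top_sum 1 t0 \<le> y k t" unfolding neg.partial_sum_def by simp
  qed
qed simp

definition top_limit :: "nat \<Rightarrow> real" where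
  "top_limit m = Inf (top_sum m ` {t0..<T0})"

lemma tendsto_top_sum:
  assumes "m \<le> card C"
  shows "(top_sum m \<longlongrightarrow> top_limit m) (at_left T0)"
proof -
  obtain \<mu> where \<mu>: "\<And>k t. k \<in> C \<Longrightarrow> t \<in> {t0..<T0} \<Longrightarrow> \<mu> \<le> y k t"
    using values_bounded_below by blast
  have "real m * \<mu> \<le> top_sum m t" if "t \<in> {t0..<T0}" for t
  proof -
    obtain A where A: "A \<in> subsets_card m" using subsets_card_nonempty[OF assms] by auto
    then have "real m * \<mu> = (\<Sum>k\<in>A. \<mu>)" unfolding subsets_card_def by simp
    also have "\<dots> \<le> partial_sum A t"
      unfolding partial_sum_def using A \<mu> that by (intro sum_mono) (auto simp: subsets_card_def)
    also have "\<dots> \<le> top_sum m t" by (rule partial_sum_le_top_sum[OF A])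
    finally show ?thesis .
  qed
  then show ?thesis
    unfolding top_limit_def
    by (intro antimono_bdd_below_tendsto_at_left top_sum_antimono assms t0_less) auto
qed

lemma top_sum_eq_partial_sum_of_upper_set:
  assumes "A \<subseteq> C" and upper: "\<And>p q. p \<in> A \<Longrightarrow> q \<in> C - A \<Longrightarrow> y q t \<le> y p t"
  shows "top_sum (card A) t = partial_sum A t"
proof -
  have "finite A" using assms finite_C finite_subset by blast
  have "partial_sum B t \<le> partial_sum A t" if "B \<in> subsets_card (card A)" for B
  proof -
    from that have "B \<subseteq> C" "card B = card A" unfolding subsets_card_def by auto
    then have "finite B" using finite_C finite_subset by blast
    have "card (B - A) = card (A - B)"
      using \<open>card B = card A\<close> \<open>finite A\<close> \<open>finite B\<close>
      by (metis Int_commute card_Diff_subset_Int finite_Int)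
    have "(\<Sum>k\<in>B - A. y k t) \<le> (\<Sum>k\<in>A - B. y k t)"
    proof (cases "A - B = {}")
      case True
      then have "card (B - A) = 0" using \<open>card (B - A) = card (A - B)\<close> by (metis card.empty)
      then have "B - A = {}" using \<open>finite B\<close> by simp
      then show ?thesis using True by simp
    next
      case False
      define c where "c = Min ((\<lambda>p. y p t) ` (A - B))"
      have "c \<in> (\<lambda>p. y p t) ` (A - B)" unfolding c_def using \<open>finite A\<close> False by (intro Min_in) auto
      then have "(\<Sum>k\<in>B - A. y k t) \<le> of_nat (card (B - A)) * c"
        using upper \<open>B \<subseteq> C\<close> by (intro sum_bounded_above) auto
      also have "\<dots> \<le> (\<Sum>k\<in>A - B. y k t)"
        unfolding \<open>card (B - A) = card (A - B)\<close> c_def using \<open>finite A\<close>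
        by (intro sum_bounded_below) auto
      finally show ?thesis .
    qed
    then show "partial_sum B t \<le> partial_sum A t"
      unfolding partial_sum_def using \<open>finite A\<close> \<open>finite B\<close>
      by (metis add_le_cancel_left sum.Int_Diff Int_commute)
  qed
  moreover have "A \<in> subsets_card (card A)" using \<open>A \<subseteq> C\<close> unfolding subsets_card_def by auto
  ultimately show ?thesis
    unfolding top_sum_def by (intro Max_eqI) (auto simp: finite_subsets_card)
qed

lemma value_eq_top_sum_increment:
  assumes "k \<in> C"
  obtains m where "1 \<le> m" "m \<le> card C" "y k t = top_sum m t - top_sum (m - 1) t"
proof -
  define A where "A = {l \<in> C. y k t < y l t}"
  have "finite A" "k \<notin> A" "A \<subseteq> C" "insert k A \<subseteq> C" unfolding A_def using finite_C assms by auto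
  have "top_sum (card (insert k A)) t = partial_sum (insert k A) t"
    by (rule top_sum_eq_partial_sum_of_upper_set) (use \<open>insert k A \<subseteq> C\<close> in \<open>auto simp: A_def\<close>)
  moreover have "top_sum (card A) t = partial_sum A t"
    by (rule top_sum_eq_partial_sum_of_upper_set) (auto simp: A_def)
  moreover have "card (insert k A) \<le> card C" using \<open>insert k A \<subseteq> C\<close> finite_C by (rule card_mono[rotated])
  ultimately show ?thesis
    using \<open>finite A\<close> \<open>k \<notin> A\<close> by (intro that[of "card (insert k A)"]) (auto simp: partial_sum_def)
qed

definition levels :: "real set" where
  "levels = (\<lambda>m. top_limit m - top_limit (m - 1)) ` {1..card C}"

lemma finite_levels: "finite levels"
  unfolding levels_def by simp

lemma eventually_near_levels:
  assumes "e > 0"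
  shows "eventually (\<lambda>t. \<forall>k\<in>C. \<exists>l\<in>levels. \<bar>y k t - l\<bar> < e) (at_left T0)"
proof -
  have "eventually (\<lambda>t. \<bar>top_sum m t - top_limit m\<bar> < e / 2) (at_left T0)" if "m \<le> card C" for m
    using tendsto_iff[THEN iffD1, OF tendsto_top_sum[OF that], rule_format, of "e / 2"] \<open>e > 0\<close>
    by (simp add: dist_real_def)
  then have "eventually (\<lambda>t. \<forall>m\<in>{..card C}. \<bar>top_sum m t - top_limit m\<bar> < e / 2) (at_left T0)"
    by (intro eventually_ball_finite) auto
  then show ?thesis
  proof eventually_elim
    case (elim t)
    show ?case
    proof
      fix k assume "k \<in> C"
      then obtain m where m: "1 \<le> m" "m \<le> card C" "y k t = top_sum m t - top_sum (m - 1) t"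
        by (rule value_eq_top_sum_increment)
      moreover have "\<bar>top_sum m t - top_limit m\<bar> < e / 2"
        "\<bar>top_sum (m - 1) t - top_limit (m - 1)\<bar> < e / 2"
        using elim m(2) by auto
      ultimately have "\<bar>y k t - (top_limit m - top_limit (m - 1))\<bar> < e" by linarith
      moreover have "top_limit m - top_limit (m - 1) \<in> levels" unfolding levels_def using m by auto
      ultimately show "\<exists>l\<in>levels. \<bar>y k t - l\<bar> < e" by blast
    qed
  qed
qed

text \<open>By continuity a value cannot jump between two levels that are \<open>\<delta>\<close> apart while staying
  within \<open>e \<le> \<delta>/3\<close> of the set of levels.\<close>

lemma eventually_near_one_level:
  assumes "k \<in> C" "\<delta> > 0"
    and sep: "\<And>p q. p \<in> levels \<Longrightarrow> q \<in> levels \<Longrightarrow> p \<noteq> q \<Longrightarrow> \<delta> \<le> \<bar>p - q\<bar>"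
    and e: "0 < e" "e \<le> \<delta> / 3"
  obtains l where "l \<in> levels" "eventually (\<lambda>t. \<bar>y k t - l\<bar> < e) (at_left T0)"
proof -
  obtain t1 where t1: "t0 \<le> t1" "t1 < T0"
    and near_all: "\<And>t. t1 \<le> t \<Longrightarrow> t < T0 \<Longrightarrow> \<forall>k\<in>C. \<exists>l\<in>levels. \<bar>y k t - l\<bar> < e"
    using eventually_at_left_obtain[OF eventually_near_levels[OF e(1)] t0_less] by blast
  have near: "\<exists>l\<in>levels. \<bar>y k t - l\<bar> < e" if "t1 \<le> t" "t < T0" for t
    using near_all[OF that] \<open>k \<in> C\<close> by blast
  obtain l0 where l0: "l0 \<in> levels" "\<bar>y k t1 - l0\<bar> < e" using near[of t1] t1 by auto
  have "\<bar>y k t - l0\<bar> < e" if t: "t1 \<le> t" "t < T0" for t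
  proof (rule ccontr)
    assume far: "\<not> \<bar>y k t - l0\<bar> < e"
    obtain l where l: "l \<in> levels" "\<bar>y k t - l\<bar> < e" using near[OF t] by auto
    then have "\<delta> \<le> \<bar>l - l0\<bar>" using sep l0 far by (metis)
    have cont: "continuous_on {t1..t} (y k)"
      by (rule continuous_on_subset[OF DERIV_continuous_on[OF y_deriv[OF \<open>k \<in> C\<close>]]])
        (use t t1 in auto)
    obtain \<tau> where \<tau>: "t1 \<le> \<tau>" "\<tau> \<le> t" "\<bar>y k \<tau> - l0\<bar> = \<delta> / 2"
    proof (cases "l0 < l")
      case True
      then show ?thesis
        using IVT'[of "y k" t1 "l0 + \<delta> / 2" t] cont l l0 \<open>\<delta> \<le> \<bar>l - l0\<bar>\<close> e t that by force
    next
      case False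
      then show ?thesis
        using IVT2'[of "y k" t "l0 - \<delta> / 2" t1] cont l l0 \<open>\<delta> \<le> \<bar>l - l0\<bar>\<close> e t that by force
    qed
    obtain l' where l': "l' \<in> levels" "\<bar>y k \<tau> - l'\<bar> < e" using near[of \<tau>] \<tau> t by auto
    show False
      using sep[OF l'(1) l0(1)] \<tau>(3) l'(2) e by (cases "l' = l0") linarith+
  qed
  then have "eventually (\<lambda>t. \<bar>y k t - l0\<bar> < e) (at_left T0)"
    by (intro eventually_at_leftI[of t1]) (use t1 in auto)
  with l0(1) show ?thesis by (rule that)
qed

lemma value_convergent:
  assumes "k \<in> C"
  shows "\<exists>l. (y k \<longlongrightarrow> l) (at_left T0)"
proof -
  obtain \<delta> where "\<delta> > 0" and sep: "\<And>p q. p \<in> levels \<Longrightarrow> q \<in> levels \<Longrightarrow> p \<noteq> q \<Longrightarrow> \<delta> \<le> \<bar>p - q\<bar>"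
    using finite_set_separated[OF finite_levels] by blast
  obtain l0 where l0: "l0 \<in> levels" "eventually (\<lambda>t. \<bar>y k t - l0\<bar> < \<delta> / 3) (at_left T0)"
    using eventually_near_one_level[OF assms \<open>\<delta> > 0\<close> sep, of "\<delta> / 3"] \<open>\<delta> > 0\<close> by auto
  have "eventually (\<lambda>t. \<bar>y k t - l0\<bar> < e) (at_left T0)" if "e > 0" for e
  proof -
    define e' where "e' = min e (\<delta> / 3)"
    have e': "0 < e'" "e' \<le> \<delta> / 3" "e' \<le> e" unfolding e'_def using \<open>e > 0\<close> \<open>\<delta> > 0\<close> by auto
    obtain l where l: "l \<in> levels" "eventually (\<lambda>t. \<bar>y k t - l\<bar> < e') (at_left T0)"
      using eventually_near_one_level[OF assms \<open>\<delta> > 0\<close> sep e'(1,2)] by blast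
    obtain t where "\<bar>y k t - l0\<bar> < \<delta> / 3" "\<bar>y k t - l\<bar> < e'"
      using eventually_happens'[OF _ eventually_conj[OF l0(2) l(2)]] by auto
    then have "l = l0" using sep[OF l(1) l0(1)] e' by (cases "l = l0") linarith+
    with l(2) e'(3) show ?thesis by (auto elim: eventually_mono)
  qed
  then show ?thesis
    by (intro exI[of _ l0]) (simp add: tendsto_iff dist_real_def)
qed

lemma cut_flux_le:
  assumes "U \<subseteq> C" "j \<in> U" "i \<in> C - U" "0 \<le> g"
    and gap: "\<And>k m. k \<in> U \<Longrightarrow> m \<in> C - U \<Longrightarrow> y m u + g \<le> y k u"
  shows "(\<Sum>k\<in>U. \<Sum>m\<in>C-U. a k m u * (y m u - y k u)) \<le> - g * a j i u"
proof -
  have fin: "finite U" "finite (C - U)" using assms finite_C finite_subset by auto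
  have "(\<Sum>k\<in>U. \<Sum>m\<in>C-U. a k m u * (y m u - y k u)) \<le> (\<Sum>k\<in>U. \<Sum>m\<in>C-U. - g * a k m u)"
  proof (intro sum_mono)
    fix k m assume "k \<in> U" "m \<in> C - U"
    then have "a k m u * (y m u - y k u) \<le> a k m u * (- g)"
      using gap a_nonneg by (intro mult_left_mono) force+
    then show "a k m u * (y m u - y k u) \<le> - g * a k m u" by (simp add: mult.commute)
  qed
  also have "\<dots> = - g * (\<Sum>k\<in>U. \<Sum>m\<in>C-U. a k m u)" by (simp add: sum_distrib_left)
  also have "\<dots> \<le> - g * a j i u"
  proof -
    have "a j i u \<le> (\<Sum>m\<in>C-U. a j m u)"
      using assms fin a_nonneg by (intro member_le_sum) auto
    also have "\<dots> \<le> (\<Sum>k\<in>U. \<Sum>m\<in>C-U. a k m u)"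
      using assms fin a_nonneg by (intro member_le_sum sum_nonneg) auto
    finally show ?thesis using \<open>0 \<le> g\<close> by (simp add: mult_left_mono)
  qed
  finally show ?thesis .
qed

lemma integral_weight_bounded_across_cut:
  assumes "U \<subseteq> C" "j \<in> U" "i \<in> C - U" "g > 0" "t0 \<le> t1" "t1 < T0"
    and gap: "\<And>u k m. t1 \<le> u \<Longrightarrow> u < T0 \<Longrightarrow> k \<in> U \<Longrightarrow> m \<in> C - U \<Longrightarrow> y m u + g \<le> y k u"
    and cont: "continuous_on {t0..<T0} (a j i)"
  obtains K where "\<And>t. t1 \<le> t \<Longrightarrow> t < T0 \<Longrightarrow> integral {t1..t} (a j i) \<le> K"
proof -
  obtain \<mu> where \<mu>: "\<And>k t. k \<in> C \<Longrightarrow> t \<in> {t0..<T0} \<Longrightarrow> \<mu> \<le> y k t"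
    using values_bounded_below by blast
  define flux where "flux u = (\<Sum>k\<in>U. \<Sum>m\<in>C-U. a k m u * (y m u - y k u))" for u
  have "integral {t1..t} (a j i) \<le> (partial_sum U t1 - real (card U) * \<mu>) / g"
    if t: "t1 \<le> t" "t < T0" for t
  proof -
    define b where "b = (t + T0) / 2"
    have b: "t < b" "b < T0" using t by (auto simp: b_def)
    define f where "f u = partial_sum U u + g * integral {t1..u} (a j i)" for u
    have cont_b: "continuous_on {t1..b} (a j i)"
      by (rule continuous_on_subset[OF cont]) (use assms b in auto)
    have "f t \<le> f t1"
    proof (rule DERIV_nonpos_imp_antimono_within[where f = f and S = "{t1..<b}"
          and f' = "\<lambda>u. flux u + g * a j i u"])
      fix u assume u: "u \<in> {t1..<b}"
      have "(partial_sum U has_real_derivative flux u) (at u within {t1..<b})"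
        unfolding flux_def
        by (rule DERIV_subset[OF partial_sum_deriv[OF \<open>U \<subseteq> C\<close>]]) (use u b assms in auto)
      moreover have "((\<lambda>u. integral {t1..u} (a j i)) has_real_derivative a j i u) (at u within {t1..<b})"
        by (rule DERIV_subset[OF integral_has_real_derivative[OF cont_b]]) (use u in auto)
      ultimately show "(f has_real_derivative flux u + g * a j i u) (at u within {t1..<b})"
        unfolding f_def[abs_def] by (intro DERIV_add DERIV_cmult)
    next
      fix u assume "u \<in> {t1..<b}"
      then have "flux u \<le> - g * a j i u"
        unfolding flux_def using assms b by (intro cut_flux_le gap) auto
      then show "flux u + g * a j i u \<le> 0" by simp
    qed (use t b in auto)
    moreover have "real (card U) * \<mu> \<le> partial_sum U t"
    proof -
      have "real (card U) * \<mu> = (\<Sum>k\<in>U. \<mu>)" by simp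
      also have "\<dots> \<le> partial_sum U t"
        unfolding partial_sum_def using \<mu> \<open>U \<subseteq> C\<close> t assms by (intro sum_mono) auto
      finally show ?thesis .
    qed
    ultimately have "g * integral {t1..t} (a j i) \<le> partial_sum U t1 - real (card U) * \<mu>"
      unfolding f_def by simp
    then show ?thesis using \<open>g > 0\<close> by (simp add: field_simps)
  qed
  then show ?thesis by (rule that)
qed

text \<open>If \<open>l i < l j\<close>, the cut at the level \<open>l j\<close> separates the values by a positive gap
  near \<open>T0\<close>; then the upper block would lose mass at a rate proportional to \<open>a i j\<close>
  while staying bounded below, which forces \<open>a i j\<close> to be integrable.\<close>

lemma limit_le_if_weight_not_integrable:
  assumes "i \<in> C" "j \<in> C"
    and lim: "\<And>k. k \<in> C \<Longrightarrow> (y k \<longlongrightarrow> l k) (at_left T0)"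
    and cont: "continuous_on {t0..<T0} (a i j)" and "c > 0"
    and not_int: "\<And>t1. t0 \<le> t1 \<Longrightarrow> t1 < T0 \<Longrightarrow>
      (\<integral>\<^sup>+ s\<in>{t1..T0}. ennreal (c * a i j s) \<partial>lborel) = \<infinity>"
  shows "l j \<le> l i"
proof (rule ccontr)
  assume "\<not> l j \<le> l i"
  define U where "U = {k \<in> C. l j \<le> l k}"
  define P where "P = U \<times> (C - U)"
  define g where "g = Min ((\<lambda>(k, m). l k - l m) ` P)"
  have "U \<subseteq> C" "j \<in> U" "i \<in> C - U" unfolding U_def using assms \<open>\<not> l j \<le> l i\<close> by auto
  have "finite P" unfolding P_def U_def using finite_C by auto
  have "g > 0"
    unfolding g_def using \<open>finite P\<close> \<open>j \<in> U\<close> \<open>i \<in> C - U\<close> by (subst Min_gr_iff) (auto simp: P_def U_def)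
  have "eventually (\<lambda>u. y m u + g / 2 < y k u) (at_left T0)" if "(k, m) \<in> P" for k m
  proof -
    have "g \<le> l k - l m" unfolding g_def using \<open>finite P\<close> that by (intro Min_le) force+
    then have "g / 2 < l k - l m" using \<open>g > 0\<close> by simp
    moreover have "((\<lambda>u. y k u - y m u) \<longlongrightarrow> l k - l m) (at_left T0)"
      using that unfolding P_def U_def by (intro tendsto_diff lim) auto
    ultimately have "eventually (\<lambda>u. g / 2 < y k u - y m u) (at_left T0)"
      by (rule order_tendstoD(1)[rotated])
    then show ?thesis by eventually_elim simp
  qed
  then have "eventually (\<lambda>u. \<forall>(k, m)\<in>P. y m u + g / 2 < y k u) (at_left T0)"
    using \<open>finite P\<close> by (auto intro: eventually_ball_finite)
  then obtain t1 where t1: "t0 \<le> t1" "t1 < T0"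
    and gap: "\<And>u. t1 \<le> u \<Longrightarrow> u < T0 \<Longrightarrow> \<forall>(k, m)\<in>P. y m u + g / 2 < y k u"
    using t0_less by (rule eventually_at_left_obtain) blast
  have gap': "y m u + g / 2 \<le> y k u" if "t1 \<le> u" "u < T0" "k \<in> U" "m \<in> C - U" for u k m
    using gap[OF that(1,2)] that(3,4) unfolding P_def by (blast intro: less_imp_le)
  have a_ji: "a j i = a i j" using a_sym by (simp add: fun_eq_iff)
  obtain K where "\<And>t. t1 \<le> t \<Longrightarrow> t < T0 \<Longrightarrow> integral {t1..t} (a i j) \<le> K"
    by (rule integral_weight_bounded_across_cut[OF \<open>U \<subseteq> C\<close> \<open>j \<in> U\<close> \<open>i \<in> C - U\<close> _ t1 gap'])
      (use \<open>g > 0\<close> cont in \<open>auto simp: a_ji\<close>)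
  then have "integral {t1..t} (\<lambda>s. c * a i j s) \<le> c * K" if "t1 \<le> t" "t < T0" for t
    using that \<open>c > 0\<close> by simp
  then have "(\<integral>\<^sup>+ s\<in>{t1..T0}. ennreal (c * a i j s) \<partial>lborel) \<le> ennreal (c * K)"
    using t1 a_nonneg \<open>c > 0\<close>
    by (intro set_nn_integral_le_if_integrals_bounded continuous_intros continuous_on_subset[OF cont]) auto
  then show False using not_int[OF t1] by (simp add: top_unique)
qed

lemma limit_eq_if_weight_not_integrable:
  assumes "i \<in> C" "j \<in> C"
    and lim: "\<And>k. k \<in> C \<Longrightarrow> (y k \<longlongrightarrow> l k) (at_left T0)"
    and cont: "continuous_on {t0..<T0} (a i j)" and "c > 0"
    and not_int: "\<And>t1. t0 \<le> t1 \<Longrightarrow> t1 < T0 \<Longrightarrow>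
      (\<integral>\<^sup>+ s\<in>{t1..T0}. ennreal (c * a i j s) \<partial>lborel) = \<infinity>"
  shows "l i = l j"
proof -
  have a_ji: "a j i = a i j" using a_sym by (simp add: fun_eq_iff)
  have "l j \<le> l i" by (rule limit_le_if_weight_not_integrable[OF assms])
  moreover have "l i \<le> l j"
    by (rule limit_le_if_weight_not_integrable[OF \<open>j \<in> C\<close> \<open>i \<in> C\<close> lim _ \<open>c > 0\<close>])
      (use cont not_int in \<open>simp_all add: a_ji\<close>)
  ultimately show ?thesis by simp
qed

end

section \<open>The regularised alignment system\<close>

definition alignment_force ::
    "nat \<Rightarrow> (real \<Rightarrow> real) \<Rightarrow> (nat \<Rightarrow> 'a::real_normed_vector) \<Rightarrow> (nat \<Rightarrow> 'a) \<Rightarrow> nat \<Rightarrow> 'a" where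
  "alignment_force N \<psi> X V k = (1 / real N) *\<^sub>R (\<Sum>l<N. \<psi> (norm (X k - X l)) *\<^sub>R (V l - V k))"

lemma alignment_force_diff_bound:
  fixes X V :: "nat \<Rightarrow> 'a::real_normed_vector"
  assumes "i < N" "j < N" and lip: "L-lipschitz_on {0..2 * BX} \<psi>"
    and X: "\<And>k. k < N \<Longrightarrow> norm (X k) \<le> BX" and V: "\<And>k. k < N \<Longrightarrow> norm (V k) \<le> BV"
  shows "norm (alignment_force N \<psi> X V i - alignment_force N \<psi> X V j)
    \<le> 2 * L * BV * norm (X i - X j) + (\<bar>\<psi> 0\<bar> + 2 * L * BX) * norm (V i - V j)"
    (is "_ \<le> ?bound")
proof -
  have "0 \<le> L" using lip by (rule lipschitz_on_nonneg)
  have "0 \<le> BX" "0 \<le> BV" using X[OF \<open>i < N\<close>] V[OF \<open>i < N\<close>] by (meson norm_ge_zero order_trans)+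
  have dist: "norm (X k - X l) \<in> {0..2 * BX}" if "k < N" "l < N" for k l
    using norm_triangle_ineq4[of "X k" "X l"] X[OF that(1)] X[OF that(2)] by auto
  have \<psi>_bound: "\<bar>\<psi> s\<bar> \<le> \<bar>\<psi> 0\<bar> + 2 * L * BX" if "s \<in> {0..2 * BX}" for s
  proof -
    have "\<bar>\<psi> s - \<psi> 0\<bar> \<le> L * \<bar>s - 0\<bar>"
      using lipschitz_onD[OF lip that, of 0] \<open>0 \<le> BX\<close> by (simp add: dist_real_def)
    also have "\<dots> \<le> L * (2 * BX)" using that \<open>0 \<le> L\<close> by (intro mult_left_mono) auto
    finally show ?thesis by linarith
  qed
  define summand where "summand l = (\<psi> (norm (X i - X l)) - \<psi> (norm (X j - X l))) *\<^sub>R (V l - V i)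
      - \<psi> (norm (X j - X l)) *\<^sub>R (V i - V j)" for l
  have summand_bound: "norm (summand l) \<le> ?bound" if "l < N" for l
  proof -
    have "\<bar>norm (X i - X l) - norm (X j - X l)\<bar> \<le> norm (X i - X j)"
      using norm_triangle_ineq3[of "X i - X l" "X j - X l"] by simp
    then have "\<bar>\<psi> (norm (X i - X l)) - \<psi> (norm (X j - X l))\<bar> \<le> L * norm (X i - X j)"
      using lipschitz_onD[OF lip dist[OF \<open>i < N\<close> that] dist[OF \<open>j < N\<close> that]] \<open>0 \<le> L\<close>
      by (auto simp: dist_real_def intro: order_trans mult_left_mono)
    moreover have "norm (V l - V i) \<le> 2 * BV"
      using norm_triangle_ineq4[of "V l" "V i"] V[OF that] V[OF \<open>i < N\<close>] by linarith
    ultimately have "\<bar>\<psi> (norm (X i - X l)) - \<psi> (norm (X j - X l))\<bar> * norm (V l - V i)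
        \<le> L * norm (X i - X j) * (2 * BV)"
      using \<open>0 \<le> L\<close> by (intro mult_mono) auto
    moreover have "\<bar>\<psi> (norm (X j - X l))\<bar> * norm (V i - V j) \<le> (\<bar>\<psi> 0\<bar> + 2 * L * BX) * norm (V i - V j)"
      using \<psi>_bound[OF dist[OF \<open>j < N\<close> that]] by (intro mult_right_mono) auto
    moreover have "norm (summand l) \<le> \<bar>\<psi> (norm (X i - X l)) - \<psi> (norm (X j - X l))\<bar> * norm (V l - V i)
        + \<bar>\<psi> (norm (X j - X l))\<bar> * norm (V i - V j)"
      unfolding summand_def by (rule order.trans[OF norm_triangle_ineq4]) simp
    moreover have "L * norm (X i - X j) * (2 * BV) = 2 * L * BV * norm (X i - X j)" by simp
    ultimately show ?thesis by linarith
  qed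
  have "\<psi> (norm (X i - X l)) *\<^sub>R (V l - V i) - \<psi> (norm (X j - X l)) *\<^sub>R (V l - V j) = summand l" for l
    unfolding summand_def by (simp add: algebra_simps)
  then have "alignment_force N \<psi> X V i - alignment_force N \<psi> X V j = (1 / real N) *\<^sub>R (\<Sum>l<N. summand l)"
    unfolding alignment_force_def by (simp add: scaleR_diff_right[symmetric] sum_subtractf[symmetric])
  also have "norm \<dots> \<le> (1 / real N) * (\<Sum>l<N. norm (summand l))"
    by (simp add: divide_right_mono norm_sum)
  also have "\<dots> \<le> (1 / real N) * (\<Sum>l<N. ?bound)"
    using summand_bound by (intro mult_left_mono sum_mono) auto
  also have "\<dots> = ?bound" using \<open>i < N\<close> by simp
  finally show ?thesis .
qed

lemma continuous_family_bounded:
  fixes Z :: "real \<Rightarrow> nat \<Rightarrow> 'a::real_normed_vector"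
  assumes "\<And>k. k < N \<Longrightarrow> continuous_on {a..b} (\<lambda>s. Z s k)"
  obtains B where "\<And>k t. k < N \<Longrightarrow> t \<in> {a..b} \<Longrightarrow> norm (Z t k) \<le> B"
proof -
  have "bounded (\<Union>k<N. (\<lambda>s. Z s k) ` {a..b})"
    by (intro bounded_UN) (auto intro!: compact_imp_bounded compact_continuous_image assms)
  then obtain B where "\<forall>z\<in>(\<Union>k<N. (\<lambda>s. Z s k) ` {a..b}). norm z \<le> B"
    unfolding bounded_iff by blast
  then show ?thesis by (intro that[of B]) auto
qed

lemma energy_derivative_bound:
  fixes e d D :: "'a::real_inner"
  assumes "norm D \<le> c1 * norm e + c2 * norm d" "0 \<le> c1" "0 \<le> c2"
  shows "2 * (e \<bullet> d) + 2 * (d \<bullet> D) \<le> (1 + c1 + 2 * c2) * (e \<bullet> e + d \<bullet> d)"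
proof -
  define ne nd where "ne = norm e" and "nd = norm d"
  have "e \<bullet> d \<le> ne * nd" unfolding ne_def nd_def by (rule Cauchy_Schwarz_ineq2[THEN abs_le_D1])
  moreover have "d \<bullet> D \<le> nd * (c1 * ne + c2 * nd)"
  proof -
    have "d \<bullet> D \<le> nd * norm D" unfolding nd_def by (rule Cauchy_Schwarz_ineq2[THEN abs_le_D1])
    also have "\<dots> \<le> nd * (c1 * ne + c2 * nd)"
      unfolding ne_def nd_def using assms(1) by (intro mult_left_mono) auto
    finally show ?thesis .
  qed
  ultimately have "2 * (e \<bullet> d) + 2 * (d \<bullet> D) \<le> 2 * (ne * nd) + 2 * (nd * (c1 * ne + c2 * nd))"
    by linarith
  also have "\<dots> = (1 + c1) * (2 * ne * nd) + 2 * c2 * (nd * nd)" by (simp add: algebra_simps)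
  also have "\<dots> \<le> (1 + c1) * (ne * ne + nd * nd) + 2 * c2 * (ne * ne + nd * nd)"
  proof -
    have "2 * ne * nd \<le> ne * ne + nd * nd"
      using sum_squares_bound[of ne nd] by (simp add: power2_eq_square)
    then show ?thesis using assms(2,3) by (intro add_mono mult_left_mono) auto
  qed
  also have "\<dots> = (1 + c1 + 2 * c2) * (e \<bullet> e + d \<bullet> d)"
    unfolding ne_def nd_def by (simp add: dot_square_norm power2_eq_square algebra_simps)
  finally show ?thesis .
qed

text \<open>Local Lipschitz continuity of \<open>\<psi>\<close> makes \<open>|X i - X j|\<^sup>2 + |V i - V j|\<^sup>2\<close> satisfy a linear
  differential inequality, so Gronwall's lemma keeps it zero.\<close>

lemma agents_with_equal_data_coincide:
  fixes X V :: "real \<Rightarrow> nat \<Rightarrow> 'a::real_inner"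
  assumes "i < N" "j < N" and init: "X 0 i = X 0 j" "V 0 i = V 0 j"
    and dX: "\<And>k t. k < N \<Longrightarrow> t \<in> {0..T} \<Longrightarrow>
      ((\<lambda>s. X s k) has_vector_derivative V t k) (at t within {0..T})"
    and dV: "\<And>k t. k < N \<Longrightarrow> t \<in> {0..T} \<Longrightarrow>
      ((\<lambda>s. V s k) has_vector_derivative alignment_force N \<psi> (X t) (V t) k) (at t within {0..T})"
    and lip: "\<And>R. \<exists>L. L-lipschitz_on {0..R} \<psi>"
    and t: "t \<in> {0..T}"
  shows "X t i = X t j \<and> V t i = V t j"
proof -
  have cont_X: "continuous_on {0..T} (\<lambda>s. X s k)" if "k < N" for k
    by (rule continuous_on_vector_derivative) (rule dX[OF that])
  have cont_V: "continuous_on {0..T} (\<lambda>s. V s k)" if "k < N" for k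
    by (rule continuous_on_vector_derivative) (rule dV[OF that])
  obtain BX where BX: "\<And>k t. k < N \<Longrightarrow> t \<in> {0..T} \<Longrightarrow> norm (X t k) \<le> BX"
    using continuous_family_bounded[of N 0 T X, OF cont_X] by blast
  obtain BV where BV: "\<And>k t. k < N \<Longrightarrow> t \<in> {0..T} \<Longrightarrow> norm (V t k) \<le> BV"
    using continuous_family_bounded[of N 0 T V, OF cont_V] by blast
  obtain L where L: "L-lipschitz_on {0..2 * BX} \<psi>" using lip by blast
  have "0 \<le> L" "0 \<le> BX" "0 \<le> BV"
    using lipschitz_on_nonneg[OF L] BX[OF \<open>i < N\<close> t] BV[OF \<open>i < N\<close> t]
    by (meson norm_ge_zero order_trans)+
  define c1 where "c1 = 2 * L * BV"
  define c2 where "c2 = \<bar>\<psi> 0\<bar> + 2 * L * BX"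
  have "0 \<le> c1" "0 \<le> c2" unfolding c1_def c2_def using \<open>0 \<le> L\<close> \<open>0 \<le> BX\<close> \<open>0 \<le> BV\<close> by auto
  define e where "e u = X u i - X u j" for u
  define d where "d u = V u i - V u j" for u
  define D where "D u = alignment_force N \<psi> (X u) (V u) i - alignment_force N \<psi> (X u) (V u) j" for u
  have de: "(e has_vector_derivative d u) (at u within {0..T})" if "u \<in> {0..T}" for u
    unfolding e_def[abs_def] d_def using assms that by (intro has_vector_derivative_diff dX)
  have dd: "(d has_vector_derivative D u) (at u within {0..T})" if "u \<in> {0..T}" for u
    unfolding d_def[abs_def] D_def using assms that by (intro has_vector_derivative_diff dV)
  have D_bound: "norm (D u) \<le> c1 * norm (e u) + c2 * norm (d u)" if "u \<in> {0..T}" for u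
    unfolding D_def c1_def c2_def e_def d_def
    using assms that by (intro alignment_force_diff_bound L BX BV)
  define E where "E u = e u \<bullet> e u + d u \<bullet> d u" for u
  have "E t = 0"
  proof (rule Gronwall_zero[where E = E and a = 0 and b = T
        and E' = "\<lambda>u. 2 * (e u \<bullet> d u) + 2 * (d u \<bullet> D u)"
        and K = "1 + c1 + 2 * c2"])
    fix u assume u: "u \<in> {0..T}"
    show "(E has_real_derivative 2 * (e u \<bullet> d u) + 2 * (d u \<bullet> D u)) (at u within {0..T})"
      unfolding E_def[abs_def] by (intro DERIV_add has_real_derivative_inner_self de dd u)
    show "2 * (e u \<bullet> d u) + 2 * (d u \<bullet> D u) \<le> (1 + c1 + 2 * c2) * E u"
      unfolding E_def by (rule energy_derivative_bound[OF D_bound[OF u] \<open>0 \<le> c1\<close> \<open>0 \<le> c2\<close>])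
    show "0 \<le> E u" unfolding E_def by simp
  qed (use init t in \<open>auto simp: E_def e_def d_def\<close>)
  then have "e t \<bullet> e t = 0" "d t \<bullet> d t = 0"
    unfolding E_def using inner_ge_zero[of "e t"] inner_ge_zero[of "d t"] by linarith+
  then show ?thesis unfolding e_def d_def by simp
qed

lemma lipschitz_on_if_C1_and_constant_near_zero:
  fixes f f' :: "real \<Rightarrow> real"
  assumes "h > 0" and const: "\<And>s. 0 \<le> s \<Longrightarrow> s \<le> h \<Longrightarrow> f s = c"
    and deriv: "\<And>s. s > 0 \<Longrightarrow> (f has_real_derivative f' s) (at s)"
    and cont: "continuous_on {0<..} f'"
  obtains L where "L-lipschitz_on {0..R} f"
proof -
  define R' where "R' = max R h"
  have "compact (f' ` {h..R'})"
    by (intro compact_continuous_image continuous_on_subset[OF cont]) (use \<open>h > 0\<close> in auto)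
  then obtain M where M: "\<forall>s\<in>{h..R'}. \<bar>f' s\<bar> \<le> M"
    by (auto dest!: compact_imp_bounded simp: bounded_iff)
  moreover have "h \<in> {h..R'}" unfolding R'_def by simp
  ultimately have "0 \<le> M" by (meson abs_ge_zero order_trans)
  have lip_M: "M-lipschitz_on {h..R'} f"
  proof (rule lipschitz_on_leI)
    fix p q assume pq: "p \<in> {h..R'}" "q \<in> {h..R'}" "p \<le> q"
    show "dist (f p) (f q) \<le> M * dist p q"
    proof (cases "p = q")
      case False
      then have "p < q" using pq by simp
      from MVT2[OF this, of f f'] obtain z where z: "p < z" "z < q" "f q - f p = (q - p) * f' z"
        using deriv pq \<open>h > 0\<close> by force
      then have "\<bar>f' z\<bar> \<le> M" using M pq by auto
      moreover have "\<bar>f p - f q\<bar> = \<bar>(q - p) * f' z\<bar>" using z(3) by (metis abs_minus_commute)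
      then have "\<bar>f p - f q\<bar> = \<bar>f' z\<bar> * (q - p)" using \<open>p < q\<close> by (simp add: abs_mult)
      ultimately show ?thesis using \<open>p < q\<close> by (simp add: dist_real_def mult_right_mono)
    qed simp
  qed (rule \<open>0 \<le> M\<close>)
  have clamp: "f p = f (max p h)" if "0 \<le> p" for p
    using const[of p] const[of h] \<open>h > 0\<close> that by (cases "p \<le> h") auto
  have "M-lipschitz_on {0..R} f"
  proof (rule lipschitz_onI)
    fix p q assume "p \<in> {0..R}" "q \<in> {0..R}"
    then have "dist (f (max p h)) (f (max q h)) \<le> M * dist (max p h) (max q h)"
      by (intro lipschitz_onD[OF lip_M]) (auto simp: R'_def)
    also have "\<dots> \<le> M * dist p q"
      using \<open>0 \<le> M\<close> by (intro mult_left_mono) (auto simp: dist_real_def max_def)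
    finally show "dist (f p) (f q) \<le> M * dist p q"
      using clamp \<open>p \<in> {0..R}\<close> \<open>q \<in> {0..R}\<close> by simp
  qed (rule \<open>0 \<le> M\<close>)
  then show ?thesis by (rule that)
qed

lemma psi_reg_lipschitz:
  assumes "0 < \<alpha>" "psi_reg \<alpha> \<psi>n" "n \<ge> 2"
  shows "\<exists>L. L-lipschitz_on {0..R} (\<psi>n n)"
proof -
  let ?h = "real n powr (- 1 / \<alpha>)"
  have reg: "\<And>s. 0 \<le> s \<Longrightarrow> s \<le> ?h \<Longrightarrow> \<psi>n n s = real n" "smooth_on {0<..} (\<psi>n n)"
    using assms unfolding psi_reg_def by blast+
  have diff: "((deriv ^^ m) (\<psi>n n)) differentiable (at s)" if "s > 0" for m s
    using reg(2) that unfolding smooth_on_def by simp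
  have "(\<psi>n n has_real_derivative deriv (\<psi>n n) s) (at s)" if "s > 0" for s
    using diff[OF that, of 0] by (simp add: DERIV_deriv_iff_real_differentiable)
  moreover have "continuous_on {0<..} (deriv (\<psi>n n))"
    using diff[of _ 1] by (intro continuous_at_imp_continuous_on ballI differentiable_imp_continuous_within) auto
  moreover have "?h > 0" using \<open>n \<ge> 2\<close> by simp
  ultimately obtain L where "L-lipschitz_on {0..R} (\<psi>n n)"
    using lipschitz_on_if_C1_and_constant_near_zero[of ?h "\<psi>n n" "real n"] reg(1) by blast
  then show ?thesis ..
qed

section \<open>The limit system\<close>

lemma norm_antimono_if_damped:
  fixes z :: "real \<Rightarrow> 'a::real_inner"
  assumes deriv: "\<And>t. t \<in> {a..<b} \<Longrightarrow> (z has_vector_derivative (- A t) *\<^sub>R z t) (at t within {a..<b})"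
    and "\<And>t. 0 \<le> A t" and "a \<le> t" "t < b"
  shows "norm (z t) \<le> norm (z a)"
proof -
  have "z t \<bullet> z t \<le> z a \<bullet> z a"
  proof (rule DERIV_nonpos_imp_antimono_within[where f = "\<lambda>s. z s \<bullet> z s" and S = "{a..<b}"
        and f' = "\<lambda>t. 2 * (z t \<bullet> (- A t) *\<^sub>R z t)"])
    fix u assume "u \<in> {a..<b}"
    show "((\<lambda>s. z s \<bullet> z s) has_real_derivative 2 * (z u \<bullet> (- A u) *\<^sub>R z u)) (at u within {a..<b})"
      by (rule has_real_derivative_inner_self[OF deriv[OF \<open>u \<in> {a..<b}\<close>]])
  next
    fix u
    show "2 * (z u \<bullet> (- A u) *\<^sub>R z u) \<le> 0" using assms(2)[of u] by simp
  qed (use assms in auto)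
  then show ?thesis by (simp add: norm_le)
qed

lemma sum_scaleR_diff_common:
  fixes f :: "'i \<Rightarrow> 'a::real_vector"
  shows "(\<Sum>l\<in>C. c l *\<^sub>R (f l - p)) - (\<Sum>l\<in>C. c l *\<^sub>R (f l - q)) = - (\<Sum>l\<in>C. c l) *\<^sub>R (p - q)"
  by (simp add: sum_subtractf[symmetric] scaleR_sum_left algebra_simps)

lemma equivclp_le_equivalence:
  assumes "equivclp R x y" and "\<And>a b. R a b \<Longrightarrow> Q a b"
    and "reflp Q" "symp Q" "transp Q"
  shows "Q x y"
  using assms(1)
proof (induction rule: equivclp_induct)
  case base
  then show ?case using \<open>reflp Q\<close> by (simp add: reflpD)
next
  case (step b c)
  then have "Q b c" using assms(2) \<open>symp Q\<close> by (auto dest: sympD)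
  with step.IH show ?case using transpD[OF \<open>transp Q\<close>] by blast
qed

locale flocking_limit =
  fixes N :: nat and \<alpha> T T0 t0 :: real and \<psi>n :: "nat \<Rightarrow> real \<Rightarrow> real"
    and x0 v0 :: "nat \<Rightarrow> real^'d::finite"
    and xn vn :: "nat \<Rightarrow> real \<Rightarrow> nat \<Rightarrow> real^'d"
    and r :: "nat \<Rightarrow> nat"
    and x v w :: "real \<Rightarrow> nat \<Rightarrow> real^'d"
  assumes N: "N \<ge> 1"
    and \<alpha>: "0 < \<alpha>"
    and psi_n: "psi_reg \<alpha> \<psi>n"
    and sol_init: "\<And>n k. n \<ge> 2 \<Longrightarrow> k < N \<Longrightarrow> xn n 0 k = x0 k \<and> vn n 0 k = v0 k"
    and sol_x: "\<And>n k t. n \<ge> 2 \<Longrightarrow> k < N \<Longrightarrow> t \<in> {0..T} \<Longrightarrow>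
        ((\<lambda>s. xn n s k) has_vector_derivative vn n t k) (at t within {0..T})"
    and sol_v: "\<And>n k t. n \<ge> 2 \<Longrightarrow> k < N \<Longrightarrow> t \<in> {0..T} \<Longrightarrow>
        ((\<lambda>s. vn n s k) has_vector_derivative
           (1 / real N) *\<^sub>R (\<Sum>l<N. \<psi>n n (norm (xn n t k - xn n t l)) *\<^sub>R (vn n t l - vn n t k)))
        (at t within {0..T})"
    and r: "strict_mono r"
    and unif: "\<And>k. k < N \<Longrightarrow>
        uniform_limit {0..T} (\<lambda>m t. xn (r m) t k) (\<lambda>t. x t k) sequentially"
    and T0_def: "T0 = Inf {t \<in> {0<..T}. \<exists>k<N. \<exists>l\<in>Bset N x0 v0 k.
                   lim (\<lambda>m. norm (xn (r m) t k - xn (r m) t l)) = 0}"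
    and T0_le: "T0 \<le> T"
    and vdef: "\<And>k t. k < N \<Longrightarrow> t \<in> {0..<T0} \<Longrightarrow>
        ((\<lambda>s. x s k) has_vector_derivative v t k) (at t within {0..<T0})"
    and C1: "\<And>k t. k < N \<Longrightarrow> t \<in> {0..<T0} \<Longrightarrow>
        uniform_limit {0..t} (\<lambda>m s. vn (r m) s k) (\<lambda>s. v s k) sequentially"
    and t0: "0 < t0" "t0 < T0"
    and w_init: "\<And>k. k < N \<Longrightarrow> w t0 k = v t0 k"
    and w_ode: "\<And>k t. k < N \<Longrightarrow> t \<in> {t0..<T0} \<Longrightarrow>
        ((\<lambda>s. w s k) has_vector_derivative
           (1 / real N) *\<^sub>R (\<Sum>l\<in>cls N x0 v0 \<alpha> x T0 k.
               psi \<alpha> (norm (x t k - x t l)) *\<^sub>R (w t l - w t k)))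
        (at t within {t0..<T0})"
begin

abbreviation "agent_class \<equiv> cls N x0 v0 \<alpha> x T0"
abbreviation "related \<equiv> csim N x0 v0 \<alpha> x T0"
abbreviation "related_step \<equiv> dsim N x0 v0 \<alpha> x T0"

lemma x_tendsto: "k < N \<Longrightarrow> t \<in> {0..T} \<Longrightarrow> (\<lambda>m. xn (r m) t k) \<longlonglongrightarrow> x t k"
  by (rule tendsto_uniform_limitI[OF unif])

lemma v_tendsto: "k < N \<Longrightarrow> t \<in> {0..<T0} \<Longrightarrow> (\<lambda>m. vn (r m) t k) \<longlonglongrightarrow> v t k"
  by (rule tendsto_uniform_limitI[OF C1]) auto

lemma no_collision_before_T0:
  assumes "k < N" "l \<in> Bset N x0 v0 k" "0 < t" "t < T0"
  shows "x t k \<noteq> x t l"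
proof
  assume "x t k = x t l"
  have "t \<in> {0..T}" using assms T0_le by auto
  moreover have "l < N" using assms unfolding Bset_def by simp
  ultimately have "(\<lambda>m. norm (xn (r m) t k - xn (r m) t l)) \<longlonglongrightarrow> norm (x t k - x t l)"
    using assms by (intro tendsto_norm tendsto_diff x_tendsto)
  then have "lim (\<lambda>m. norm (xn (r m) t k - xn (r m) t l)) = 0" using \<open>x t k = x t l\<close> by (simp add: limI)
  then have "T0 \<le> t"
    unfolding T0_def using assms \<open>t \<in> {0..T}\<close> by (intro cInf_lower bdd_belowI[of _ 0]) auto
  then show False using assms by simp
qed

text \<open>Agents with identical initial data coincide in every regularised system, hence in the limit.\<close>

lemma limit_agents_coincide:
  assumes "p < N" "q < N" "q \<notin> Bset N x0 v0 p" "t \<in> {0..<T0}"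
  shows "x t p = x t q \<and> v t p = v t q"
proof -
  have "x0 q = x0 p" "v0 q = v0 p" using assms unfolding Bset_def by auto
  have "xn (r m) t p = xn (r m) t q \<and> vn (r m) t p = vn (r m) t q" if "m \<ge> 2" for m
  proof (rule agents_with_equal_data_coincide[where \<psi> = "\<psi>n (r m)" and T = T])
    have "r m \<ge> 2" using seq_suble[OF r, of m] that by simp
    then show "xn (r m) 0 p = xn (r m) 0 q" "vn (r m) 0 p = vn (r m) 0 q"
      "\<And>k t. k < N \<Longrightarrow> t \<in> {0..T} \<Longrightarrow>
        ((\<lambda>s. xn (r m) s k) has_vector_derivative vn (r m) t k) (at t within {0..T})"
      "\<And>k t. k < N \<Longrightarrow> t \<in> {0..T} \<Longrightarrow> ((\<lambda>s. vn (r m) s k) has_vector_derivative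
        alignment_force N (\<psi>n (r m)) (xn (r m) t) (vn (r m) t) k) (at t within {0..T})"
      "\<And>R. \<exists>L. L-lipschitz_on {0..R} (\<psi>n (r m))"
      using sol_init[of "r m"] \<open>x0 q = x0 p\<close> \<open>v0 q = v0 p\<close> assms sol_x sol_v
        psi_reg_lipschitz[OF \<alpha> psi_n]
      by (auto simp: alignment_force_def)
  qed (use assms T0_le in auto)
  then have eq: "eventually (\<lambda>m. xn (r m) t p = xn (r m) t q \<and> vn (r m) t p = vn (r m) t q) sequentially"
    unfolding eventually_sequentially by blast
  have "eventually (\<lambda>m. xn (r m) t q = xn (r m) t p) sequentially"
    "eventually (\<lambda>m. vn (r m) t q = vn (r m) t p) sequentially"
    using eq by (auto elim: eventually_mono)
  then have "(\<lambda>m. xn (r m) t p) \<longlonglongrightarrow> x t q" "(\<lambda>m. vn (r m) t p) \<longlonglongrightarrow> v t q"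
    using assms T0_le
    by (auto intro: Lim_transform_eventually[OF x_tendsto[OF \<open>q < N\<close>]]
        Lim_transform_eventually[OF v_tendsto[OF \<open>q < N\<close>]])
  then show ?thesis
    using x_tendsto[of p t] v_tendsto[of p t] assms T0_le LIMSEQ_unique by auto
qed

lemma related_agent_class_eq: "related p q \<Longrightarrow> agent_class p = agent_class q"
  unfolding cls_def csim_def by (auto intro: equivclp_trans equivclp_sym)

lemma finite_agent_class: "finite (agent_class p)"
  unfolding cls_def by simp

lemma w_eq_if_same_data:
  assumes "p < N" "q < N" "q \<notin> Bset N x0 v0 p" "related p q" "t \<in> {t0..<T0}"
  shows "w t p = w t q"
proof -
  define z where "z t = w t p - w t q" for t
  define A where "A t = (\<Sum>l\<in>agent_class p. psi \<alpha> (norm (x t p - x t l))) / real N" for t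
  have "(z has_vector_derivative (- A t) *\<^sub>R z t) (at t within {t0..<T0})" if t: "t \<in> {t0..<T0}" for t
  proof -
    have "x t q = x t p" using limit_agents_coincide assms t t0 by auto
    then have "(1 / real N) *\<^sub>R (\<Sum>l\<in>agent_class p. psi \<alpha> (norm (x t p - x t l)) *\<^sub>R (w t l - w t p))
        - (1 / real N) *\<^sub>R (\<Sum>l\<in>agent_class q. psi \<alpha> (norm (x t q - x t l)) *\<^sub>R (w t l - w t q))
        = (- A t) *\<^sub>R z t"
      unfolding related_agent_class_eq[OF \<open>related p q\<close>, symmetric] A_def z_def
      by (simp add: scaleR_diff_right[symmetric] sum_scaleR_diff_common divide_inverse)
    moreover have "(z has_vector_derivative
        (1 / real N) *\<^sub>R (\<Sum>l\<in>agent_class p. psi \<alpha> (norm (x t p - x t l)) *\<^sub>R (w t l - w t p))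
        - (1 / real N) *\<^sub>R (\<Sum>l\<in>agent_class q. psi \<alpha> (norm (x t q - x t l)) *\<^sub>R (w t l - w t q)))
        (at t within {t0..<T0})"
      unfolding z_def[abs_def] using assms t by (intro has_vector_derivative_diff w_ode)
    ultimately show ?thesis by simp
  qed
  moreover have "0 \<le> A t" for t unfolding A_def psi_def by (simp add: sum_nonneg)
  ultimately have "norm (z t) \<le> norm (z t0)"
    using assms by (intro norm_antimono_if_damped[where A = A and b = T0]) auto
  moreover have "z t0 = 0"
    unfolding z_def using w_init limit_agents_coincide[of p q t0] assms t0 by simp
  ultimately show ?thesis unfolding z_def by simp
qed

definition weight :: "nat \<Rightarrow> nat \<Rightarrow> real \<Rightarrow> real" where
  "weight k l t = psi \<alpha> (norm (x t k - x t l)) / real N"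

lemma consensus_component:
  assumes "p < N"
  shows "consensus_system (\<lambda>k t. w t k $ c) weight (agent_class p) t0 T0"
proof
  fix k t assume k: "k \<in> agent_class p" and t: "t \<in> {t0..<T0}"
  then have "k < N" "agent_class k = agent_class p"
    using related_agent_class_eq[of p k] unfolding cls_def by auto
  from bounded_linear.has_vector_derivative[OF bounded_linear_vec_nth w_ode[OF \<open>k < N\<close> t]]
  show "((\<lambda>t. w t k $ c) has_real_derivative (\<Sum>l\<in>agent_class p. weight k l t * (w t l $ c - w t k $ c)))
      (at t within {t0..<T0})"
    unfolding \<open>agent_class k = agent_class p\<close> weight_def
    by (simp add: has_real_derivative_iff_has_vector_derivative sum_distrib_left)
qed (use finite_agent_class t0 in \<open>auto simp: weight_def psi_def norm_minus_commute\<close>)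

lemma continuous_weight:
  assumes "p < N" "q \<in> Bset N x0 v0 p"
  shows "continuous_on {t0..<T0} (weight p q)"
proof -
  have "q < N" using assms unfolding Bset_def by simp
  have "continuous_on {t0..<T0} (\<lambda>t. x t k)" if "k < N" for k
    by (rule continuous_on_subset[OF continuous_on_vector_derivative[OF vdef[OF that]]]) (use t0 in auto)
  then have "continuous_on {t0..<T0} (\<lambda>t. norm (x t p - x t q) powr (- \<alpha>) / real N)"
    using no_collision_before_T0[OF assms] t0 \<open>p < N\<close> \<open>q < N\<close>
    by (intro continuous_intros) auto
  then show ?thesis
    by (rule continuous_on_eq)
      (use no_collision_before_T0[OF assms] t0 in \<open>auto simp: weight_def psi_def\<close>)
qed

lemma w_component_diff_tendsto_zero_if_not_integrable:
  assumes "p < N" "q \<in> Bset N x0 v0 p" "related p q"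
    and not_int: "\<forall>t<T0. (\<integral>\<^sup>+ s\<in>{t..T0}. ennreal (psi \<alpha> (norm (x s p - x s q))) \<partial>lborel) = \<infinity>"
  shows "((\<lambda>t. w t p $ c - w t q $ c) \<longlongrightarrow> 0) (at_left T0)"
proof -
  interpret consensus_system "\<lambda>k t. w t k $ c" weight "agent_class p" t0 T0
    using consensus_component[OF \<open>p < N\<close>] .
  have "related p p" unfolding csim_def by simp
  then have "p \<in> agent_class p" "q \<in> agent_class p"
    using assms unfolding cls_def Bset_def by simp_all
  have "\<forall>k\<in>agent_class p. \<exists>l. ((\<lambda>t. w t k $ c) \<longlongrightarrow> l) (at_left T0)"
    using value_convergent by (rule ballI)
  from bchoice[OF this] obtain l
    where l: "\<forall>k\<in>agent_class p. ((\<lambda>t. w t k $ c) \<longlongrightarrow> l k) (at_left T0)" ..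
  have "l p = l q"
  proof (rule limit_eq_if_weight_not_integrable[where c = "real N"])
    show "p \<in> agent_class p" "q \<in> agent_class p" by fact+
    show "((\<lambda>t. w t k $ c) \<longlongrightarrow> l k) (at_left T0)" if "k \<in> agent_class p" for k
      using l that by blast
    show "continuous_on {t0..<T0} (weight p q)" by (rule continuous_weight[OF assms(1,2)])
    show "0 < real N" using N by simp
    have "real N * weight p q s = psi \<alpha> (norm (x s p - x s q))" for s
      unfolding weight_def using N by simp
    then show "(\<integral>\<^sup>+ s\<in>{t1..T0}. ennreal (real N * weight p q s) \<partial>lborel) = \<infinity>"
      if "t1 < T0" for t1
      using not_int that by simp
  qed
  then show ?thesis
    using tendsto_diff[OF l[rule_format, OF \<open>p \<in> agent_class p\<close>] l[rule_format, OF \<open>q \<in> agent_class p\<close>]]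
    by simp
qed

lemma w_diff_tendsto_zero_if_related_step:
  assumes "related_step p q"
  shows "((\<lambda>t. w t p - w t q) \<longlongrightarrow> 0) (at_left T0)"
proof -
  have "p < N" "q < N" using assms unfolding dsim_def by auto
  have "related p q" using assms unfolding csim_def by (rule r_into_equivclp)
  show ?thesis
  proof (cases "q \<in> Bset N x0 v0 p")
    case False
    have "w t p - w t q = 0" if "t \<in> {t0<..<T0}" for t
      using that w_eq_if_same_data[OF \<open>p < N\<close> \<open>q < N\<close> False \<open>related p q\<close>, of t] by simp
    then have "eventually (\<lambda>t. w t p - w t q = 0) (at_left T0)"
      using t0 by (intro eventually_at_leftI[of t0]) auto
    then show ?thesis by (rule tendsto_eventually)
  next
    case True
    with assms have "\<forall>t<T0. (\<integral>\<^sup>+ s\<in>{t..T0}. ennreal (psi \<alpha> (norm (x s p - x s q))) \<partial>lborel) = \<infinity>"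
      unfolding dsim_def by simp
    then show ?thesis
      using w_component_diff_tendsto_zero_if_not_integrable[OF \<open>p < N\<close> True \<open>related p q\<close>]
      by (intro vec_tendstoI) simp
  qed
qed

theorem w_diff_tendsto_zero_if_related:
  assumes "related i j"
  shows "((\<lambda>t. norm (w t i - w t j)) \<longlongrightarrow> 0) (at_left T0)"
proof -
  define Q where "Q p q \<longleftrightarrow> ((\<lambda>t. w t p - w t q) \<longlongrightarrow> 0) (at_left T0)" for p q
  have step: "related_step p q \<Longrightarrow> Q p q" for p q
    unfolding Q_def by (rule w_diff_tendsto_zero_if_related_step)
  have "reflp Q" unfolding Q_def by (simp add: reflp_def)
  moreover have "symp Q"
  proof (rule sympI)
    fix p q assume "Q p q"
    from tendsto_minus[OF this[unfolded Q_def]] show "Q q p" unfolding Q_def by simp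
  qed
  moreover have "transp Q"
  proof (rule transpI)
    fix p q s assume "Q p q" "Q q s"
    from tendsto_add[OF this[unfolded Q_def]] show "Q p s" unfolding Q_def by simp
  qed
  ultimately have "Q i j"
    using equivclp_le_equivalence[of related_step i j Q] assms step unfolding csim_def by blast
  then show ?thesis unfolding Q_def by (rule tendsto_norm_zero)
qed

end

theorem proposition2p6:
  fixes N :: nat and \<alpha> T T0 t0 :: real and \<psi>n :: "nat \<Rightarrow> real \<Rightarrow> real"
    and x0 v0 :: "nat \<Rightarrow> real^'d::finite"
    and xn vn :: "nat \<Rightarrow> real \<Rightarrow> nat \<Rightarrow> real^'d"
    and r :: "nat \<Rightarrow> nat"
    and x v w :: "real \<Rightarrow> nat \<Rightarrow> real^'d"
    and i j :: nat
  assumes N: "N \<ge> 1"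
    and \<alpha>: "0 < \<alpha>" "\<alpha> < 1"
    and T: "T > 0"
    and psi_n: "psi_reg \<alpha> \<psi>n"
    and sol_init: "\<And>n k. n \<ge> 2 \<Longrightarrow> k < N \<Longrightarrow> xn n 0 k = x0 k \<and> vn n 0 k = v0 k"
    and sol_x: "\<And>n k t. n \<ge> 2 \<Longrightarrow> k < N \<Longrightarrow> t \<in> {0..T} \<Longrightarrow>
        ((\<lambda>s. xn n s k) has_vector_derivative vn n t k) (at t within {0..T})"
    and sol_v: "\<And>n k t. n \<ge> 2 \<Longrightarrow> k < N \<Longrightarrow> t \<in> {0..T} \<Longrightarrow>
        ((\<lambda>s. vn n s k) has_vector_derivative
           (1 / real N) *\<^sub>R (\<Sum>l<N. \<psi>n n (norm (xn n t k - xn n t l)) *\<^sub>R (vn n t l - vn n t k)))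
        (at t within {0..T})"
    and r: "strict_mono r"
    and unif: "\<And>k. k < N \<Longrightarrow>
        uniform_limit {0..T} (\<lambda>m t. xn (r m) t k) (\<lambda>t. x t k) sequentially"
    and T0_def: "T0 = Inf {t \<in> {0<..T}. \<exists>k<N. \<exists>l\<in>Bset N x0 v0 k.
                   lim (\<lambda>m. norm (xn (r m) t k - xn (r m) t l)) = 0}"
    and T0_fin: "{t \<in> {0<..T}. \<exists>k<N. \<exists>l\<in>Bset N x0 v0 k.
                   lim (\<lambda>m. norm (xn (r m) t k - xn (r m) t l)) = 0} \<noteq> {}"
    and T0_le: "T0 \<le> T"
    and vdef: "\<And>k t. k < N \<Longrightarrow> t \<in> {0..<T0} \<Longrightarrow>
        ((\<lambda>s. x s k) has_vector_derivative v t k) (at t within {0..<T0})"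
    and C1: "\<And>k t. k < N \<Longrightarrow> t \<in> {0..<T0} \<Longrightarrow>
        uniform_limit {0..t} (\<lambda>m s. vn (r m) s k) (\<lambda>s. v s k) sequentially"
    and t0: "0 < t0" "t0 < T0"
    and w_init: "\<And>k. k < N \<Longrightarrow> w t0 k = v t0 k"
    and w_ode: "\<And>k t. k < N \<Longrightarrow> t \<in> {t0..<T0} \<Longrightarrow>
        ((\<lambda>s. w s k) has_vector_derivative
           (1 / real N) *\<^sub>R (\<Sum>l\<in>cls N x0 v0 \<alpha> x T0 k.
               psi \<alpha> (norm (x t k - x t l)) *\<^sub>R (w t l - w t k)))
        (at t within {t0..<T0})"
    and ij: "i < N" "j < N" "csim N x0 v0 \<alpha> x T0 i j"
  shows "((\<lambda>t. norm (w t i - w t j)) \<longlongrightarrow> 0) (at_left T0)"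
proof -
  interpret flocking_limit N \<alpha> T T0 t0 \<psi>n x0 v0 xn vn r x v w
    by (rule flocking_limit.intro)
      (fact N \<alpha>(1) psi_n sol_init sol_x sol_v r unif T0_def T0_le vdef C1 t0 w_init w_ode)+
  show ?thesis using ij(3) by (rule w_diff_tendsto_zero_if_related)
qed

end
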